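(* Let $S$ be a numerical semigroup. If $d \in S \setminus \{0\}$, then there is an $A \in \mathsf{M}_d(\mathbb{Q})$ such that $\mathcal{S}(A) = S$. In particular, $\dim_{\mathrm{mat}} S \leq m(S) = \min (S \setminus \{0\})$.
   Context: $\mathbb{N} = \{0,1,2,\ldots\}$. A semigroup means an additive subsemigroup of $\mathbb{N}$ containing $0$; a numerical semigroup is a semigroup with finite complement in $\mathbb{N}$. Its multiplicity $m(S)$ is the smallest nonzero element of $S$. $\mathsf{M}_d(X)$ denotes the $d\times d$ matrices with entries in $X$. For $A \in \mathsf{M}_d(\mathbb{Q})$, $\mathcal{S}(A) = \{ n \in \mathbb{N} : A^n \in \mathsf{M}_d(\mathbb{Z})\}$. The matricial dimension $\dim_{\mathrm{mat}} S$ of a semigroup $S$ is the smallest $d$ such that $S = \mathcal{S}(A)$ for some $A \in \mathsf{M}_d(\mathbb{Q})$. *)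

theory Defs
  imports Complex_Main "Jordan_Normal_Form.Matrix"
begin

definition numerical_semigroup :: "nat set \<Rightarrow> bool" where
  "numerical_semigroup S \<longleftrightarrow> 0 \<in> S \<and> (\<forall>a\<in>S. \<forall>b\<in>S. a + b \<in> S) \<and> finite (UNIV - S)"

definition semigroup_multiplicity :: "nat set \<Rightarrow> nat" where
  "semigroup_multiplicity S = (LEAST n. n \<in> S \<and> n \<noteq> 0)"

definition integral_mat :: "rat mat \<Rightarrow> bool" where
  "integral_mat M \<longleftrightarrow> (\<forall>i<dim_row M. \<forall>j<dim_col M. M $$ (i, j) \<in> \<int>)"

definition int_power_set :: "rat mat \<Rightarrow> nat set" where
  "int_power_set A = {n. integral_mat (A ^\<^sub>m n)}"

definition matricial_dim :: "nat set \<Rightarrow> nat" where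
  "matricial_dim S = (LEAST d. \<exists>A \<in> carrier_mat d d. int_power_set A = S)"

end

theory Submission
  imports Defs
begin

text \<open>Let \<open>apery n\<close> be the least element of \<open>S\<close> congruent to \<open>n\<close>
  modulo \<open>d\<close> (the Apery set of \<open>S\<close> with respect to \<open>d\<close>) and \<open>level n = (n - apery n) / d\<close>.
  Then \<open>n \<in> S\<close> iff \<open>level n \<ge> 0\<close>, \<open>level\<close> is superadditive because \<open>apery\<close> is subadditive,
  and \<open>level (n + d) = level n + 1\<close>. The cyclic shift matrix with weights
  \<open>2 powi (level (i + 1) - level i)\<close> has as \<open>n\<close>-th power the cyclic shift by \<open>n\<close> with weights
  \<open>2 powi (level (i + n) - level i)\<close>. These exponents are bounded below by \<open>level n\<close> and equal
  to it for \<open>i = 0\<close>, so the power is integral iff \<open>n \<in> S\<close>.\<close>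

lemma power_int_in_Ints_iff:
  fixes x :: "'a :: linordered_field"
  assumes "x \<in> \<int>" "x > 1"
  shows "x powi e \<in> \<int> \<longleftrightarrow> e \<ge> 0"
proof
  assume integral: "x powi e \<in> \<int>"
  show "e \<ge> 0"
  proof (rule ccontr)
    assume "\<not> e \<ge> 0"
    then have "x powi e = inverse (x ^ nat (- e))" "nat (- e) > 0"
      by (auto simp: power_int_def power_inverse)
    moreover have "1 < x ^ nat (- e)"
      using \<open>x > 1\<close> \<open>nat (- e) > 0\<close> by (simp add: one_less_power)
    ultimately have "0 < x powi e" "x powi e < 1"
      by (simp_all add: inverse_less_1_iff)
    then show False
      using Ints_nonzero_abs_less1[OF integral] by simp
  qed
next
  assume "e \<ge> 0"
  then show "x powi e \<in> \<int>"
    using \<open>x \<in> \<int>\<close> by (simp add: power_int_def)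
qed

definition weighted_cycle_mat :: "nat \<Rightarrow> 'a :: field \<Rightarrow> (nat \<Rightarrow> int) \<Rightarrow> 'a mat" where
  "weighted_cycle_mat d x f =
     mat d d (\<lambda>(j, i). if j = Suc i mod d then x powi (f (Suc i) - f i) else 0)"

lemma weighted_cycle_mat_carrier: "weighted_cycle_mat d x f \<in> carrier_mat d d"
  by (simp add: weighted_cycle_mat_def)

lemma weighted_cycle_mat_power:
  fixes x :: "'a :: field"
  assumes "x \<noteq> 0" and f_shift: "\<And>n. f (n + d) = f n + c"
  shows "weighted_cycle_mat d x f ^\<^sub>m n =
           mat d d (\<lambda>(j, i). if j = (i + n) mod d then x powi (f (i + n) - f i) else 0)"
    (is "_ = ?B n")
proof (induction n)
  case 0
  show ?case by (rule eq_matI) (auto simp: weighted_cycle_mat_def)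
next
  case (Suc n)
  let ?M = "weighted_cycle_mat d x f"
  show ?case
  proof (rule eq_matI)
    fix j i assume "j < dim_row (?B (Suc n))" and "i < dim_col (?B (Suc n))"
    then have j: "j < d" and i: "i < d" by auto
    define k where "k = Suc i mod d"
    have k: "k < d" using i by (simp add: k_def)
    \<comment> \<open>only at the wrap-around \<open>Suc i = d\<close> is the hypothesis on \<open>f\<close> needed\<close>
    have shift_k: "f (k + n) - f k = f (Suc i + n) - f (Suc i)"
    proof (cases "Suc i = d")
      case True
      then show ?thesis using f_shift[of 0] f_shift[of n] by (simp add: k_def add.commute)
    next
      case False
      then show ?thesis using i by (simp add: k_def)
    qed
    have "(?M ^\<^sub>m Suc n) $$ (j, i) = (\<Sum>l = 0..<d. (?M ^\<^sub>m n) $$ (j, l) * ?M $$ (l, i))"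
      using i j by (simp add: Suc scalar_prod_def weighted_cycle_mat_def)
    also have "\<dots> = (\<Sum>l = 0..<d. if l = k then (?M ^\<^sub>m n) $$ (j, k) * x powi (f (Suc i) - f i) else 0)"
      by (rule sum.cong) (auto simp: weighted_cycle_mat_def i k_def)
    also have "\<dots> = (?M ^\<^sub>m n) $$ (j, k) * x powi (f (Suc i) - f i)"
      using k by simp
    also have "\<dots> = (if j = (k + n) mod d then x powi (f (k + n) - f k) * x powi (f (Suc i) - f i) else 0)"
      using j k by (simp add: Suc)
    also have "\<dots> = (if j = (i + Suc n) mod d then x powi (f (i + Suc n) - f i) else 0)"
    proof -
      have "(k + n) mod d = (i + Suc n) mod d"
        by (simp add: k_def mod_add_left_eq)
      then show ?thesis
        using \<open>x \<noteq> 0\<close> by (simp add: shift_k power_int_add[symmetric])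
    qed
    finally show "(?M ^\<^sub>m Suc n) $$ (j, i) = ?B (Suc n) $$ (j, i)"
      using i j by simp
  qed (simp_all add: weighted_cycle_mat_def)
qed

lemma numerical_semigroup_cofinite:
  assumes "numerical_semigroup S"
  obtains N where "\<And>m. m \<ge> N \<Longrightarrow> m \<in> S"
proof -
  have "finite (UNIV - S)"
    using assms by (simp add: numerical_semigroup_def)
  then obtain N where "\<forall>m \<in> UNIV - S. m < N"
    by (metis finite_nat_set_iff_bounded)
  then show ?thesis
    using that by (metis Diff_iff UNIV_I not_less)
qed

lemma semigroup_multiplicity_mem:
  assumes "numerical_semigroup S"
  shows "semigroup_multiplicity S \<in> S - {0}"
proof -
  obtain N where "\<And>m. m \<ge> N \<Longrightarrow> m \<in> S"
    using numerical_semigroup_cofinite[OF assms] by blast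
  then have "Suc N \<in> S" by simp
  then have "\<exists>n. n \<in> S \<and> n \<noteq> 0" by blast
  then show ?thesis
    unfolding semigroup_multiplicity_def by (metis (mono_tags, lifting) DiffI LeastI_ex singletonD)
qed

locale numerical_semigroup_elem =
  fixes S :: "nat set" and d :: nat
  assumes numerical: "numerical_semigroup S" and d_mem: "d \<in> S" and d_pos: "d > 0"
begin

lemma zero_mem: "0 \<in> S" and add_mem: "a \<in> S \<Longrightarrow> b \<in> S \<Longrightarrow> a + b \<in> S"
  using numerical by (auto simp: numerical_semigroup_def)

lemma add_mult_d_mem: "a \<in> S \<Longrightarrow> a + k * d \<in> S"
proof (induction k)
  case (Suc k)
  then show ?case
    using add_mem[OF _ d_mem, of "a + k * d"] by (simp add: algebra_simps)
qed simp

definition apery :: "nat \<Rightarrow> nat" where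
  "apery n = (LEAST m. m \<in> S \<and> m mod d = n mod d)"

lemma apery_exists: "\<exists>m. m \<in> S \<and> m mod d = n mod d"
proof -
  obtain N where "\<And>m. m \<ge> N \<Longrightarrow> m \<in> S"
    using numerical_semigroup_cofinite[OF numerical] by blast
  moreover have "N \<le> n + N * d"
    using d_pos by (simp add: trans_le_add2)
  moreover have "(n + N * d) mod d = n mod d"
    by simp
  ultimately show ?thesis
    by blast
qed

lemma apery_mem: "apery n \<in> S" and apery_mod: "apery n mod d = n mod d"
  using LeastI_ex[OF apery_exists[of n]] by (simp_all add: apery_def)

lemma apery_le: "m \<in> S \<Longrightarrow> m mod d = n mod d \<Longrightarrow> apery n \<le> m"
  unfolding apery_def by (auto intro: Least_le)

lemma apery_add_d: "apery (n + d) = apery n"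
  by (simp add: apery_def)

lemma apery_0: "apery 0 = 0"
  using apery_le[of 0 0] zero_mem by simp

lemma apery_add_le: "apery (m + n) \<le> apery m + apery n"
proof (rule apery_le)
  show "apery m + apery n \<in> S"
    by (simp add: add_mem apery_mem)
  show "(apery m + apery n) mod d = (m + n) mod d"
    by (metis apery_mod mod_add_eq)
qed

lemma mem_iff_apery_le: "n \<in> S \<longleftrightarrow> apery n \<le> n"
proof
  assume "apery n \<le> n"
  moreover have "d dvd n - apery n"
    using apery_mod[of n] \<open>apery n \<le> n\<close> by (metis mod_eq_dvd_iff_nat)
  ultimately obtain k where "n = apery n + k * d"
    by (metis dvdE le_add_diff_inverse mult.commute)
  then show "n \<in> S"
    by (metis add_mult_d_mem apery_mem)
qed (simp add: apery_le)

definition level :: "nat \<Rightarrow> int" where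
  "level n = (int n - int (apery n)) div int d"

lemma d_mult_level: "int d * level n = int n - int (apery n)"
proof -
  have "int d dvd int n - int (apery n)"
    using apery_mod[of n] by (metis mod_eq_dvd_iff of_nat_mod)
  then show ?thesis
    by (simp add: level_def)
qed

lemma level_0: "level 0 = 0"
  by (simp add: level_def apery_0)

lemma level_add_d: "level (n + d) = level n + 1"
proof -
  have "int d * level (n + d) = int d * (level n + 1)"
    using d_mult_level[of "n + d"] d_mult_level[of n] apery_add_d[of n] by (simp add: algebra_simps)
  then show ?thesis
    using d_pos by simp
qed

lemma level_superadditive: "level m + level n \<le> level (m + n)"
proof -
  have "int d * (level (m + n) - level m - level n) = int (apery m) + int (apery n) - int (apery (m + n))"
    using d_mult_level[of "m + n"] d_mult_level[of m] d_mult_level[of n] by (simp add: algebra_simps)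
  then have "0 \<le> int d * (level (m + n) - level m - level n)"
    using apery_add_le[of m n] by simp
  then show ?thesis
    using d_pos by (simp add: zero_le_mult_iff)
qed

lemma level_nonneg_iff: "level n \<ge> 0 \<longleftrightarrow> n \<in> S"
proof -
  have "level n \<ge> 0 \<longleftrightarrow> int d * level n \<ge> 0"
    using d_pos by (simp add: zero_le_mult_iff)
  then show ?thesis
    using mem_iff_apery_le by (simp add: d_mult_level)
qed

lemma int_power_set_level_mat: "int_power_set (weighted_cycle_mat d (2 :: rat) level) = S"
proof -
  let ?A = "weighted_cycle_mat d (2 :: rat) level"
  have power: "?A ^\<^sub>m n = mat d d (\<lambda>(j, i). if j = (i + n) mod d then 2 powi (level (i + n) - level i) else 0)"
    for n by (rule weighted_cycle_mat_power) (simp_all add: level_add_d)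
  have "integral_mat (?A ^\<^sub>m n) \<longleftrightarrow> n \<in> S" for n
  proof
    assume integral: "integral_mat (?A ^\<^sub>m n)"
    have "dim_row (?A ^\<^sub>m n) = d" "dim_col (?A ^\<^sub>m n) = d"
      by (simp_all add: power)
    then have "(?A ^\<^sub>m n) $$ (n mod d, 0) \<in> \<int>"
      using integral d_pos unfolding integral_mat_def by simp
    moreover have "(?A ^\<^sub>m n) $$ (n mod d, 0) = 2 powi level n"
      using d_pos by (simp add: power level_0)
    ultimately have "(2 :: rat) powi level n \<in> \<int>"
      by simp
    then show "n \<in> S"
      by (simp add: power_int_in_Ints_iff level_nonneg_iff)
  next
    assume "n \<in> S"
    then have "0 \<le> level (i + n) - level i" for i
      using level_superadditive[of i n] level_nonneg_iff[of n] by linarith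
    then show "integral_mat (?A ^\<^sub>m n)"
      by (simp add: integral_mat_def power power_int_in_Ints_iff)
  qed
  then show ?thesis
    by (auto simp: int_power_set_def)
qed

end

theorem theorem2p2:
  fixes S :: "nat set"
  assumes "numerical_semigroup S"
  shows "(\<forall>d \<in> S - {0}. \<exists>A \<in> carrier_mat d d. int_power_set A = S)
         \<and> matricial_dim S \<le> semigroup_multiplicity S"
proof -
  have realizable: "\<exists>A \<in> carrier_mat d d. int_power_set A = S" if "d \<in> S - {0}" for d
  proof -
    interpret numerical_semigroup_elem S d
      using assms that by unfold_locales auto
    show ?thesis
      using weighted_cycle_mat_carrier int_power_set_level_mat by blast
  qed
  then have "\<exists>A \<in> carrier_mat (semigroup_multiplicity S) (semigroup_multiplicity S). int_power_set A = S"
    using semigroup_multiplicity_mem[OF assms] by blast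
  then have "matricial_dim S \<le> semigroup_multiplicity S"
    unfolding matricial_dim_def by (rule Least_le)
  with realizable show ?thesis
    by blast
qed

end
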